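(* Let $h_N(\rho)=\tfrac12\big[(\mathrm{tr}\,\rho^{1/2})^2-1\big]$ for density matrices $\rho$ on a finite-dimensional Hilbert space; this is the reduced function of the negativity, i.e. $N(|\psi\rangle)=h_N(\mathrm{tr}_B|\psi\rangle\langle\psi|)=\sum_{i<j}\lambda_i\lambda_j$ for a pure state with Schmidt coefficients $\lambda_i$. Then $h_N$ is strictly concave: for all density matrices $\rho_1\neq\rho_2$ and $0<p<1$, $h_N(p\rho_1+(1-p)\rho_2)>p\,h_N(\rho_1)+(1-p)\,h_N(\rho_2)$.
   Context: The negativity of a bipartite state $\rho$ is $N(\rho)=\sum_i\mu_i$, where $\mu_i$ are the absolute values of the negative eigenvalues of the partial transpose $\rho^{T_A}$. *)

theory Defs
  imports "Jordan_Normal_Form.Matrix" "Jordan_Normal_Form.Conjugate"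
begin

definition mtrace :: "complex mat \<Rightarrow> complex" where
  "mtrace A = (\<Sum>i<dim_row A. A $$ (i, i))"

definition hermitian_mat :: "nat \<Rightarrow> complex mat \<Rightarrow> bool" where
  "hermitian_mat n A \<longleftrightarrow> A \<in> carrier_mat n n \<and>
     (\<forall>i<n. \<forall>j<n. A $$ (i, j) = cnj (A $$ (j, i)))"

definition psd_mat :: "nat \<Rightarrow> complex mat \<Rightarrow> bool" where
  "psd_mat n A \<longleftrightarrow> hermitian_mat n A \<and>
     (\<forall>v \<in> carrier_vec n. Im (conjugate v \<bullet> (A *\<^sub>v v)) = 0 \<and> Re (conjugate v \<bullet> (A *\<^sub>v v)) \<ge> 0)"

definition density_mat :: "nat \<Rightarrow> complex mat \<Rightarrow> bool" where
  "density_mat n \<rho> \<longleftrightarrow> psd_mat n \<rho> \<and> mtrace \<rho> = 1"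

definition mat_sqrt :: "nat \<Rightarrow> complex mat \<Rightarrow> complex mat" where
  "mat_sqrt n A = (THE B. psd_mat n B \<and> B * B = A)"

definition hN :: "nat \<Rightarrow> complex mat \<Rightarrow> real" where
  "hN n \<rho> = ((Re (mtrace (mat_sqrt n \<rho>)))\<^sup>2 - 1) / 2"

end

theory Submission
  imports Defs "Jordan_Normal_Form.Spectral_Radius"
begin

text \<open>Diagonalise \<open>\<rho> = p \<rho>1 + (1 - p) \<rho>2 = U diag(\<gamma>) U\<^sup>*\<close>. In the basis \<open>U\<close> the
  diagonals \<open>\<alpha>, \<beta>\<close> of \<open>\<rho>1, \<rho>2\<close> satisfy \<open>\<gamma> = p \<alpha> + (1 - p) \<beta>\<close>, so
  \<open>tr sqrt(\<rho>) = \<Sum>\<^sub>i sqrt(p \<alpha>\<^sub>i + (1 - p) \<beta>\<^sub>i)\<close>. For a single state \<open>\<sigma>\<close> with diagonal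
  \<open>\<alpha>\<close> in the basis \<open>U\<close>, the matrix \<open>S = U\<^sup>* sqrt(\<sigma>) U\<close> is Hermitian with
  \<open>S\<^sup>2 = U\<^sup>* \<sigma> U\<close>, hence \<open>\<alpha>\<^sub>i = \<Sum>\<^sub>k |S\<^sub>i\<^sub>k|\<^sup>2 \<ge> (Re S\<^sub>i\<^sub>i)\<^sup>2\<close> and
  \<open>(tr sqrt(\<sigma>))\<^sup>2 \<le> (\<Sum>\<^sub>i sqrt(\<alpha>\<^sub>i))\<^sup>2\<close>, with equality only if \<open>\<sigma>\<close> is diagonal in
  that basis. The map \<open>x \<mapsto> (\<Sum>\<^sub>i sqrt(x\<^sub>i))\<^sup>2\<close> is concave, and strictly so between
  distinct vectors with equal sums. If both states are diagonal in the basis \<open>U\<close>, their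
  diagonals differ and strict concavity applies; otherwise the first estimate is already strict.\<close>

section \<open>Concavity of the squared sum of square roots\<close>

lemma convex_comb_mult_le_sqrt:
  fixes a b c d p :: real
  assumes nonneg: "0 \<le> a" "0 \<le> b" "0 \<le> c" "0 \<le> d" and p: "0 \<le> p" "p \<le> 1"
  shows "p * a * c + (1 - p) * b * d \<le> sqrt (p * a\<^sup>2 + (1 - p) * b\<^sup>2) * sqrt (p * c\<^sup>2 + (1 - p) * d\<^sup>2)"
    and "p * a * c + (1 - p) * b * d = sqrt (p * a\<^sup>2 + (1 - p) * b\<^sup>2) * sqrt (p * c\<^sup>2 + (1 - p) * d\<^sup>2)
      \<Longrightarrow> 0 < p \<Longrightarrow> p < 1 \<Longrightarrow> a * d = b * c"
proof -
  define x where "x = p * a * c + (1 - p) * b * d"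
  define y where "y = (p * a\<^sup>2 + (1 - p) * b\<^sup>2) * (p * c\<^sup>2 + (1 - p) * d\<^sup>2)"
  have lagrange: "y = x\<^sup>2 + p * (1 - p) * (a * d - b * c)\<^sup>2"
    unfolding x_def y_def by (simp add: power2_eq_square algebra_simps)
  have rhs: "sqrt (p * a\<^sup>2 + (1 - p) * b\<^sup>2) * sqrt (p * c\<^sup>2 + (1 - p) * d\<^sup>2) = sqrt y"
    unfolding y_def by (simp add: real_sqrt_mult)
  have gap: "0 \<le> p * (1 - p) * (a * d - b * c)\<^sup>2"
    using p by simp
  show "p * a * c + (1 - p) * b * d \<le> sqrt (p * a\<^sup>2 + (1 - p) * b\<^sup>2) * sqrt (p * c\<^sup>2 + (1 - p) * d\<^sup>2)"
    unfolding rhs x_def[symmetric] using lagrange gap by (intro real_le_rsqrt) simp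
  assume eq: "p * a * c + (1 - p) * b * d = sqrt (p * a\<^sup>2 + (1 - p) * b\<^sup>2) * sqrt (p * c\<^sup>2 + (1 - p) * d\<^sup>2)"
    and p': "0 < p" "p < 1"
  have "x = sqrt y"
    using eq unfolding rhs x_def .
  moreover have "0 \<le> y"
    using lagrange gap by simp
  ultimately have "x\<^sup>2 = y"
    by simp
  then have "p * (1 - p) * (a * d - b * c)\<^sup>2 = 0"
    using lagrange by simp
  then show "a * d = b * c"
    using p' by simp
qed

text \<open>Both sides expand into double sums over pairs \<open>(i, j)\<close>, which are compared termwise by
  the previous lemma.\<close>

lemma sum_sqrt_sq_concave:
  fixes \<alpha> \<beta> :: "nat \<Rightarrow> real"
  assumes \<alpha>: "\<And>i. i < n \<Longrightarrow> 0 \<le> \<alpha> i" and \<beta>: "\<And>i. i < n \<Longrightarrow> 0 \<le> \<beta> i"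
    and p: "0 \<le> p" "p \<le> 1"
  shows "p * (\<Sum>i<n. sqrt (\<alpha> i))\<^sup>2 + (1 - p) * (\<Sum>i<n. sqrt (\<beta> i))\<^sup>2
      \<le> (\<Sum>i<n. sqrt (p * \<alpha> i + (1 - p) * \<beta> i))\<^sup>2"
    and "p * (\<Sum>i<n. sqrt (\<alpha> i))\<^sup>2 + (1 - p) * (\<Sum>i<n. sqrt (\<beta> i))\<^sup>2
      = (\<Sum>i<n. sqrt (p * \<alpha> i + (1 - p) * \<beta> i))\<^sup>2
      \<Longrightarrow> 0 < p \<Longrightarrow> p < 1 \<Longrightarrow> i < n \<Longrightarrow> j < n \<Longrightarrow> \<alpha> i * \<beta> j = \<beta> i * \<alpha> j"
proof -
  define u where "u i = sqrt (\<alpha> i)" for i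
  define v where "v i = sqrt (\<beta> i)" for i
  define g where "g i = sqrt (p * \<alpha> i + (1 - p) * \<beta> i)" for i
  define gap where "gap i j = g i * g j - (p * u i * u j + (1 - p) * v i * v j)" for i j
  have g: "g i = sqrt (p * (u i)\<^sup>2 + (1 - p) * (v i)\<^sup>2)" if "i < n" for i
    using \<alpha>[OF that] \<beta>[OF that] by (simp add: g_def u_def v_def)
  have uv: "0 \<le> u i" "0 \<le> v i" if "i < n" for i
    using \<alpha>[OF that] \<beta>[OF that] by (simp_all add: u_def v_def)
  have gap_nonneg: "0 \<le> gap i j" if "i < n" "j < n" for i j
    using convex_comb_mult_le_sqrt(1)[OF uv[OF that(1)] uv[OF that(2)] p]
    by (simp add: gap_def g[OF that(1)] g[OF that(2)])
  have square: "(\<Sum>i<n. f i)\<^sup>2 = (\<Sum>i<n. \<Sum>j<n. f i * f j)" for f :: "nat \<Rightarrow> real"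
    by (simp add: power2_eq_square sum_product)
  have expand: "(\<Sum>i<n. g i)\<^sup>2 - (p * (\<Sum>i<n. u i)\<^sup>2 + (1 - p) * (\<Sum>i<n. v i)\<^sup>2)
      = (\<Sum>i<n. \<Sum>j<n. gap i j)"
    unfolding square by (simp add: gap_def sum_distrib_left sum_subtractf sum.distrib mult.assoc)
  have "0 \<le> (\<Sum>i<n. \<Sum>j<n. gap i j)"
    using gap_nonneg by (intro sum_nonneg) auto
  then show "p * (\<Sum>i<n. sqrt (\<alpha> i))\<^sup>2 + (1 - p) * (\<Sum>i<n. sqrt (\<beta> i))\<^sup>2
      \<le> (\<Sum>i<n. sqrt (p * \<alpha> i + (1 - p) * \<beta> i))\<^sup>2"
    using expand by (simp add: u_def v_def g_def)
  assume "p * (\<Sum>i<n. sqrt (\<alpha> i))\<^sup>2 + (1 - p) * (\<Sum>i<n. sqrt (\<beta> i))\<^sup>2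
      = (\<Sum>i<n. sqrt (p * \<alpha> i + (1 - p) * \<beta> i))\<^sup>2"
    and p': "0 < p" "p < 1" and ij: "i < n" "j < n"
  then have "(\<Sum>i<n. \<Sum>j<n. gap i j) = 0"
    using expand by (simp add: u_def v_def g_def)
  then have "(\<Sum>j<n. gap i j) = 0"
    using gap_nonneg ij(1) by (subst (asm) sum_nonneg_eq_0_iff) (auto intro: sum_nonneg)
  then have "gap i j = 0"
    using gap_nonneg ij by (subst (asm) sum_nonneg_eq_0_iff) auto
  then have "u i * v j = v i * u j"
    using convex_comb_mult_le_sqrt(2)[OF uv[OF ij(1)] uv[OF ij(2)] p _ p']
    by (simp add: gap_def g[OF ij(1)] g[OF ij(2)])
  then have "(u i * v j)\<^sup>2 = (v i * u j)\<^sup>2"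
    by simp
  then show "\<alpha> i * \<beta> j = \<beta> i * \<alpha> j"
    using \<alpha>[OF ij(1)] \<alpha>[OF ij(2)] \<beta>[OF ij(1)] \<beta>[OF ij(2)]
    by (simp add: u_def v_def power_mult_distrib)
qed

lemma eq_if_cross_proportional:
  fixes \<alpha> \<beta> :: "nat \<Rightarrow> real"
  assumes \<alpha>: "\<And>i. i < n \<Longrightarrow> 0 \<le> \<alpha> i" and \<beta>: "\<And>i. i < n \<Longrightarrow> 0 \<le> \<beta> i"
    and sums: "(\<Sum>i<n. \<alpha> i) = (\<Sum>i<n. \<beta> i)"
    and cross: "\<And>i j. i < n \<Longrightarrow> j < n \<Longrightarrow> \<alpha> i * \<beta> j = \<beta> i * \<alpha> j"
    and j: "j < n"
  shows "\<alpha> j = \<beta> j"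
proof (cases "(\<Sum>i<n. \<alpha> i) = 0")
  case True
  then have "\<forall>i\<in>{..<n}. \<alpha> i = 0" "\<forall>i\<in>{..<n}. \<beta> i = 0"
    using \<alpha> \<beta> sums by (subst (asm) sum_nonneg_eq_0_iff; auto)+
  then show ?thesis
    using j by simp
next
  case False
  have "\<beta> j * (\<Sum>i<n. \<alpha> i) = (\<Sum>i<n. \<alpha> i * \<beta> j)"
    by (simp add: sum_distrib_left mult.commute)
  also have "\<dots> = (\<Sum>i<n. \<beta> i * \<alpha> j)"
    using cross j by (intro sum.cong) auto
  also have "\<dots> = \<alpha> j * (\<Sum>i<n. \<alpha> i)"
    by (simp add: sums sum_distrib_left mult.commute)
  finally show ?thesis
    using False by simp
qed

lemma sum_sqrt_sq_strictly_concave: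
  fixes \<alpha> \<beta> :: "nat \<Rightarrow> real"
  assumes \<alpha>: "\<And>i. i < n \<Longrightarrow> 0 \<le> \<alpha> i" and \<beta>: "\<And>i. i < n \<Longrightarrow> 0 \<le> \<beta> i"
    and sums: "(\<Sum>i<n. \<alpha> i) = (\<Sum>i<n. \<beta> i)" and p: "0 < p" "p < 1"
    and ne: "i < n" "\<alpha> i \<noteq> \<beta> i"
  shows "p * (\<Sum>i<n. sqrt (\<alpha> i))\<^sup>2 + (1 - p) * (\<Sum>i<n. sqrt (\<beta> i))\<^sup>2
    < (\<Sum>i<n. sqrt (p * \<alpha> i + (1 - p) * \<beta> i))\<^sup>2"
proof -
  have "0 \<le> p" "p \<le> 1"
    using p by auto
  note concave = sum_sqrt_sq_concave[of n \<alpha> \<beta> p, OF \<alpha> \<beta> this]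
  have "p * (\<Sum>i<n. sqrt (\<alpha> i))\<^sup>2 + (1 - p) * (\<Sum>i<n. sqrt (\<beta> i))\<^sup>2
    \<noteq> (\<Sum>i<n. sqrt (p * \<alpha> i + (1 - p) * \<beta> i))\<^sup>2"
    using concave(2) p eq_if_cross_proportional[of n \<alpha> \<beta>, OF \<alpha> \<beta> sums _ ne(1)] ne(2) by auto
  then show ?thesis
    using concave(1) p by fastforce
qed

lemma abs_sum_le_sum_sqrt:
  fixes s a :: "nat \<Rightarrow> real"
  assumes sq_le: "\<And>i. i < n \<Longrightarrow> (s i)\<^sup>2 \<le> a i"
  shows "\<bar>\<Sum>i<n. s i\<bar> \<le> (\<Sum>i<n. sqrt (a i))"
    and "\<bar>\<Sum>i<n. s i\<bar> = (\<Sum>i<n. sqrt (a i)) \<Longrightarrow> i < n \<Longrightarrow> (s i)\<^sup>2 = a i"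
proof -
  have le: "\<bar>s i\<bar> \<le> sqrt (a i)" if "i < n" for i
    using real_sqrt_le_mono[OF sq_le[OF that]] by simp
  have mono: "(\<Sum>i<n. \<bar>s i\<bar>) \<le> (\<Sum>i<n. sqrt (a i))"
    using le by (intro sum_mono) auto
  show "\<bar>\<Sum>i<n. s i\<bar> \<le> (\<Sum>i<n. sqrt (a i))"
    using sum_abs[of s "{..<n}"] mono by linarith
  assume eq: "\<bar>\<Sum>i<n. s i\<bar> = (\<Sum>i<n. sqrt (a i))" and i: "i < n"
  have "(\<Sum>i<n. sqrt (a i)) = (\<Sum>i<n. \<bar>s i\<bar>)"
    using eq sum_abs[of s "{..<n}"] mono by linarith
  then have "(\<Sum>i<n. sqrt (a i) - \<bar>s i\<bar>) = 0"
    by (simp add: sum_subtractf)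
  then have "\<bar>s i\<bar> = sqrt (a i)"
    using le i by (subst (asm) sum_nonneg_eq_0_iff) auto
  then show "(s i)\<^sup>2 = a i"
    using sq_le[OF i] by (metis abs_ge_zero power2_abs real_sqrt_ge_0_iff real_sqrt_pow2 order_trans zero_le_power2)
qed

section \<open>Adjoints, diagonal and unitary matrices\<close>

lemma mat_adjoint_dim [simp]:
  "dim_row (mat_adjoint A) = dim_col A" "dim_col (mat_adjoint A) = dim_row A"
  by (simp_all add: mat_adjoint_def)

lemma mat_adjoint_index [simp]:
  fixes A :: "complex mat"
  shows "i < dim_col A \<Longrightarrow> j < dim_row A \<Longrightarrow> mat_adjoint A $$ (i, j) = cnj (A $$ (j, i))"
  by (simp add: mat_adjoint_def mat_of_rows_index)

lemma mat_adjoint_carrier [simp]: "A \<in> carrier_mat m n \<Longrightarrow> mat_adjoint A \<in> carrier_mat n m"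
  by (intro carrier_matI) (simp_all add: carrier_matD)

lemma mat_adjoint_adjoint [simp]: "mat_adjoint (mat_adjoint A) = (A :: complex mat)"
  by (rule eq_matI) auto

lemma mat_adjoint_one [simp]: "mat_adjoint (1\<^sub>m n :: complex mat) = 1\<^sub>m n"
  by (rule eq_matI) auto

lemma mat_adjoint_mult:
  fixes A B :: "complex mat"
  assumes "A \<in> carrier_mat m n" "B \<in> carrier_mat n k"
  shows "mat_adjoint (A * B) = mat_adjoint B * mat_adjoint A"
  by (rule eq_matI)
    (use assms in \<open>auto simp: scalar_prod_def mult.commute intro!: sum.cong\<close>)

lemma mat_adjoint_add:
  fixes A B :: "complex mat"
  shows "A \<in> carrier_mat m n \<Longrightarrow> B \<in> carrier_mat m n \<Longrightarrow> mat_adjoint (A + B) = mat_adjoint A + mat_adjoint B"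
  by (rule eq_matI) auto

lemma mat_adjoint_minus:
  fixes A B :: "complex mat"
  shows "A \<in> carrier_mat m n \<Longrightarrow> B \<in> carrier_mat m n \<Longrightarrow> mat_adjoint (A - B) = mat_adjoint A - mat_adjoint B"
  by (rule eq_matI) auto

lemma mat_adjoint_smult: "mat_adjoint (c \<cdot>\<^sub>m A) = cnj c \<cdot>\<^sub>m mat_adjoint (A :: complex mat)"
  by (rule eq_matI) auto

lemma hermitian_mat_iff_adjoint:
  "hermitian_mat n A \<longleftrightarrow> A \<in> carrier_mat n n \<and> mat_adjoint A = A"
proof -
  have "mat_adjoint A = A \<longleftrightarrow> (\<forall>i<n. \<forall>j<n. A $$ (i, j) = cnj (A $$ (j, i)))"
    if A: "A \<in> carrier_mat n n"
  proof
    assume adj: "mat_adjoint A = A"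
    show "\<forall>i<n. \<forall>j<n. A $$ (i, j) = cnj (A $$ (j, i))"
    proof (intro allI impI)
      fix i j assume "i < n" "j < n"
      then have "mat_adjoint A $$ (i, j) = cnj (A $$ (j, i))"
        using A by simp
      then show "A $$ (i, j) = cnj (A $$ (j, i))"
        by (simp only: adj)
    qed
  next
    assume sym: "\<forall>i<n. \<forall>j<n. A $$ (i, j) = cnj (A $$ (j, i))"
    show "mat_adjoint A = A"
    proof (rule eq_matI)
      fix i j assume "i < dim_row A" "j < dim_col A"
      then have ij: "i < n" "j < n"
        using A by auto
      then have "mat_adjoint A $$ (i, j) = cnj (A $$ (j, i))"
        using A by simp
      also have "\<dots> = A $$ (i, j)"
        using sym ij by metis
      finally show "mat_adjoint A $$ (i, j) = A $$ (i, j)" .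
    qed (use A in auto)
  qed
  then show ?thesis
    unfolding hermitian_mat_def by blast
qed

lemma hermitian_convex_comb:
  assumes "hermitian_mat n A" "hermitian_mat n B"
  shows "hermitian_mat n (complex_of_real a \<cdot>\<^sub>m A + complex_of_real b \<cdot>\<^sub>m B)"
  using assms by (simp add: hermitian_mat_iff_adjoint mat_adjoint_add[of _ n n] mat_adjoint_smult)

lemma scalar_prod_mat_adjoint:
  fixes A :: "complex mat"
  assumes A: "A \<in> carrier_mat n m" and v: "v \<in> carrier_vec n" and w: "w \<in> carrier_vec m"
  shows "conjugate v \<bullet> (A *\<^sub>v w) = conjugate (mat_adjoint A *\<^sub>v v) \<bullet> w"
proof -
  have "conjugate v \<bullet> (A *\<^sub>v w) = (\<Sum>i<n. \<Sum>j<m. cnj (v $ i) * A $$ (i, j) * w $ j)"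
    using A v w by (simp add: scalar_prod_def row_def atLeast0LessThan sum_distrib_left mult.assoc)
  also have "\<dots> = (\<Sum>j<m. cnj (\<Sum>i<n. cnj (A $$ (i, j)) * v $ i) * w $ j)"
    by (subst sum.swap) (simp add: cnj_sum sum_distrib_left sum_distrib_right mult_ac)
  also have "\<dots> = conjugate (mat_adjoint A *\<^sub>v v) \<bullet> w"
    using A v w by (simp add: scalar_prod_def row_def atLeast0LessThan)
  finally show ?thesis .
qed

lemma mtrace_mult_comm:
  assumes "A \<in> carrier_mat n m" "B \<in> carrier_mat m n"
  shows "mtrace (A * B) = mtrace (B * A)"
proof -
  have "mtrace (A * B) = (\<Sum>i<n. \<Sum>j<m. A $$ (i, j) * B $$ (j, i))"
    using assms by (simp add: mtrace_def scalar_prod_def atLeast0LessThan)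
  also have "\<dots> = (\<Sum>j<m. \<Sum>i<n. B $$ (j, i) * A $$ (i, j))"
    by (subst sum.swap) (simp add: mult.commute)
  finally show ?thesis
    using assms by (simp add: mtrace_def scalar_prod_def atLeast0LessThan)
qed

definition real_diag_mat :: "nat \<Rightarrow> (nat \<Rightarrow> real) \<Rightarrow> complex mat" where
  "real_diag_mat n d = mat n n (\<lambda>(i, j). if i = j then complex_of_real (d i) else 0)"

lemma real_diag_mat_carrier [simp]: "real_diag_mat n d \<in> carrier_mat n n"
  and real_diag_mat_dim [simp]: "dim_row (real_diag_mat n d) = n" "dim_col (real_diag_mat n d) = n"
  by (simp_all add: real_diag_mat_def)

lemma real_diag_mat_index [simp]:
  "i < n \<Longrightarrow> j < n \<Longrightarrow> real_diag_mat n d $$ (i, j) = (if i = j then complex_of_real (d i) else 0)"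
  by (simp add: real_diag_mat_def)

lemma mat_adjoint_real_diag_mat [simp]: "mat_adjoint (real_diag_mat n d) = real_diag_mat n d"
  by (rule eq_matI) auto

lemma real_diag_mat_mult: "real_diag_mat n d * real_diag_mat n e = real_diag_mat n (\<lambda>i. d i * e i)"
  by (rule eq_matI)
    (auto simp: scalar_prod_def if_distrib[of "\<lambda>x. x * _"] cong: if_cong)

lemma real_diag_mat_mult_vec:
  "v \<in> carrier_vec n \<Longrightarrow> real_diag_mat n d *\<^sub>v v = vec n (\<lambda>i. complex_of_real (d i) * v $ i)"
  by (rule eq_vecI) (auto simp: scalar_prod_def if_distrib[of "\<lambda>x. x * _"] cong: if_cong)

lemma real_diag_mat_form:
  assumes "v \<in> carrier_vec n"
  shows "conjugate v \<bullet> (real_diag_mat n d *\<^sub>v v) = complex_of_real (\<Sum>i<n. d i * (cmod (v $ i))\<^sup>2)"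
proof -
  have "conjugate v \<bullet> (real_diag_mat n d *\<^sub>v v) = (\<Sum>i<n. complex_of_real (d i) * (v $ i * cnj (v $ i)))"
    using assms by (simp add: real_diag_mat_mult_vec scalar_prod_def atLeast0LessThan mult_ac)
  then show ?thesis by (simp add: complex_norm_square[unfolded of_real_power])
qed

lemma mtrace_real_diag_mat: "mtrace (real_diag_mat n d) = complex_of_real (\<Sum>i<n. d i)"
  by (simp add: mtrace_def)

definition unitary_mat :: "nat \<Rightarrow> complex mat \<Rightarrow> bool" where
  "unitary_mat n U \<longleftrightarrow> U \<in> carrier_mat n n \<and> mat_adjoint U * U = 1\<^sub>m n \<and> U * mat_adjoint U = 1\<^sub>m n"

lemma unitary_matI:
  assumes "U \<in> carrier_mat n n" "mat_adjoint U * U = 1\<^sub>m n"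
  shows "unitary_mat n U"
  using assms mat_mult_left_right_inverse[of "mat_adjoint U" n U] by (simp add: unitary_mat_def)

lemma unitary_matD:
  assumes "unitary_mat n U"
  shows "U \<in> carrier_mat n n" "mat_adjoint U \<in> carrier_mat n n"
    "mat_adjoint U * U = 1\<^sub>m n" "U * mat_adjoint U = 1\<^sub>m n"
  using assms by (auto simp: unitary_mat_def)

lemma unitary_mat_cancel [simp]:
  assumes "unitary_mat n U" "dim_row X = n"
  shows "mat_adjoint U * (U * X) = X" "U * (mat_adjoint U * X) = X"
proof -
  note U = unitary_matD[OF assms(1)]
  have X: "X \<in> carrier_mat n (dim_col X)"
    using assms(2) by (rule carrier_matI) simp
  show "mat_adjoint U * (U * X) = X"
    using assoc_mult_mat[OF U(2) U(1) X] U(3) left_mult_one_mat[OF X] by metis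
  show "U * (mat_adjoint U * X) = X"
    using assoc_mult_mat[OF U(1) U(2) X] U(4) left_mult_one_mat[OF X] by metis
qed

lemma unitary_mat_adjoint: "unitary_mat n U \<Longrightarrow> unitary_mat n (mat_adjoint U)"
  by (simp add: unitary_mat_def)

lemma unitary_mat_mult:
  assumes U: "unitary_mat n U" and V: "unitary_mat n V"
  shows "unitary_mat n (U * V)"
proof (rule unitary_matI)
  note U' = unitary_matD[OF U] and V' = unitary_matD[OF V]
  show "U * V \<in> carrier_mat n n"
    using U' V' by simp
  have "mat_adjoint (U * V) * (U * V) = mat_adjoint V * (mat_adjoint U * (U * V))"
    using U' V' by (simp add: mat_adjoint_mult[of _ n n] assoc_mult_mat[of _ n n _ n _ n])
  then show "mat_adjoint (U * V) * (U * V) = 1\<^sub>m n"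
    using U V V' by simp
qed

lemma unitary_mat_col:
  assumes U: "unitary_mat n U" and i: "i < n"
  shows "col U i \<in> carrier_vec n" "mat_adjoint U *\<^sub>v col U i = unit_vec n i"
    "U *\<^sub>v unit_vec n i = col U i"
proof -
  note U' = unitary_matD[OF U]
  show "col U i \<in> carrier_vec n"
    using U'(1) by (intro carrier_vecI) simp
  have "mat_adjoint U *\<^sub>v col U i = col (mat_adjoint U * U) i"
    using U'(1,2) i by (simp add: col_mult2[of _ n n _ n])
  then show "mat_adjoint U *\<^sub>v col U i = unit_vec n i"
    using i by (simp add: U'(3))
  have "col (U * 1\<^sub>m n) i = U *\<^sub>v col (1\<^sub>m n) i"
    by (rule col_mult2[OF U'(1) one_carrier_mat i])
  then show "U *\<^sub>v unit_vec n i = col U i"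
    using U'(1) i by simp
qed

lemma unitary_col_norm:
  assumes U: "unitary_mat n U" and i: "i < n"
  shows "conjugate (col U i) \<bullet> col U i = 1"
proof -
  have "(mat_adjoint U * U) $$ (i, i) = conjugate (col U i) \<bullet> col U i"
    using unitary_matD(1)[OF U] i by (simp add: scalar_prod_def)
  then show ?thesis
    using i by (simp add: unitary_matD(3)[OF U])
qed

lemma mult_carrier_mat_square [simp]:
  "A \<in> carrier_mat n n \<Longrightarrow> B \<in> carrier_mat n n \<Longrightarrow> A * B \<in> carrier_mat n n"
  by (rule mult_carrier_mat)

lemma unitary_conj_carrier [simp]:
  "unitary_mat n U \<Longrightarrow> X \<in> carrier_mat n n \<Longrightarrow> mat_adjoint U * X * U \<in> carrier_mat n n"
  using unitary_matD[of n U] by simp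

lemma unitary_conj_cancel:
  assumes U: "unitary_mat n U" and X: "X \<in> carrier_mat n n"
  shows "U * (mat_adjoint U * X * U) * mat_adjoint U = X"
  using U X unitary_matD[OF U] by (simp add: assoc_mult_mat[of _ n n _ n _ n])

lemma unitary_conj_mult:
  assumes U: "unitary_mat n U" and "X \<in> carrier_mat n n" "Y \<in> carrier_mat n n"
  shows "(mat_adjoint U * X * U) * (mat_adjoint U * Y * U) = mat_adjoint U * (X * Y) * U"
  using assms unitary_matD[OF U] by (simp add: assoc_mult_mat[of _ n n _ n _ n])

lemma unitary_conj_adjoint:
  assumes U: "unitary_mat n U" and X: "X \<in> carrier_mat n n"
  shows "mat_adjoint (mat_adjoint U * X * U) = mat_adjoint U * mat_adjoint X * U"
  using X unitary_matD[OF U] by (simp add: mat_adjoint_mult[of _ n n _ n] assoc_mult_mat[of _ n n _ n _ n])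

lemma unitary_conj_hermitian:
  "unitary_mat n U \<Longrightarrow> hermitian_mat n X \<Longrightarrow> hermitian_mat n (mat_adjoint U * X * U)"
  by (simp add: hermitian_mat_iff_adjoint unitary_conj_adjoint)

lemma unitary_conj_mtrace:
  assumes U: "unitary_mat n U" and X: "X \<in> carrier_mat n n"
  shows "mtrace (mat_adjoint U * X * U) = mtrace X"
proof -
  have "mtrace (mat_adjoint U * X * U) = mtrace (U * (mat_adjoint U * X))"
    using unitary_matD[OF U] X by (intro mtrace_mult_comm) auto
  then show ?thesis
    using U X by simp
qed

lemma unitary_conj_convex_comb:
  assumes U: "unitary_mat n U" and A: "A \<in> carrier_mat n n" and B: "B \<in> carrier_mat n n"
  shows "mat_adjoint U * (a \<cdot>\<^sub>m A + b \<cdot>\<^sub>m B) * U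
    = a \<cdot>\<^sub>m (mat_adjoint U * A * U) + b \<cdot>\<^sub>m (mat_adjoint U * B * U)"
  using unitary_matD[OF U] A B
  by (simp add: mult_add_distrib_mat[of _ n n _ n] add_mult_distrib_mat[of _ n n _ _ n]
      mult_smult_distrib[of _ n n _ n] mult_smult_assoc_mat[of _ n n _ n])

text \<open>Taking real parts loses nothing: this is only applied to Hermitian \<open>X\<close>, whose diagonal
  in any unitary basis is real.\<close>

definition diag_in_basis :: "complex mat \<Rightarrow> complex mat \<Rightarrow> nat \<Rightarrow> real" where
  "diag_in_basis U X i = Re ((mat_adjoint U * X * U) $$ (i, i))"

lemma unitary_conj_diag_sum:
  assumes U: "unitary_mat n U" and X: "X \<in> carrier_mat n n"
  shows "(\<Sum>i<n. diag_in_basis U X i) = Re (mtrace X)"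
proof -
  define Y where "Y = mat_adjoint U * X * U"
  have "dim_row Y = n"
    using unitary_matD[OF U] by (simp add: Y_def)
  then have "(\<Sum>i<n. Re (Y $$ (i, i))) = Re (mtrace Y)"
    by (simp add: mtrace_def)
  then show ?thesis
    unfolding diag_in_basis_def Y_def unitary_conj_mtrace[OF U X] .
qed

lemma diag_in_basis_unitary_diag:
  assumes U: "unitary_mat n U" and i: "i < n"
  shows "diag_in_basis U (U * real_diag_mat n d * mat_adjoint U) i = d i"
  using unitary_conj_cancel[OF unitary_mat_adjoint[OF U] real_diag_mat_carrier, of d] i
  by (simp add: diag_in_basis_def)

lemma diag_in_basis_convex_comb:
  assumes U: "unitary_mat n U" and A: "A \<in> carrier_mat n n" and B: "B \<in> carrier_mat n n" and i: "i < n"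
  shows "diag_in_basis U (complex_of_real a \<cdot>\<^sub>m A + complex_of_real b \<cdot>\<^sub>m B) i
    = a * diag_in_basis U A i + b * diag_in_basis U B i"
  using unitary_matD[OF U] A B i by (simp add: diag_in_basis_def unitary_conj_convex_comb[OF U A B])

lemma unitary_diag_mult_vec:
  assumes U: "unitary_mat n U" and v: "v \<in> carrier_vec n"
  shows "(U * real_diag_mat n d * mat_adjoint U) *\<^sub>v v = U *\<^sub>v (real_diag_mat n d *\<^sub>v (mat_adjoint U *\<^sub>v v))"
proof -
  note U' = unitary_matD[OF U]
  have "mat_adjoint U *\<^sub>v v \<in> carrier_vec n"
    using U'(2) v by simp
  then show ?thesis
    using assoc_mult_mat_vec[OF _ U'(2) v, of "U * real_diag_mat n d" n]
      assoc_mult_mat_vec[OF U'(1) real_diag_mat_carrier, of "mat_adjoint U *\<^sub>v v" d] U'(1)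
    by simp
qed

lemma unitary_diag_eigenvector:
  assumes U: "unitary_mat n U" and i: "i < n"
  shows "(U * real_diag_mat n d * mat_adjoint U) *\<^sub>v col U i = complex_of_real (d i) \<cdot>\<^sub>v col U i"
proof -
  have "real_diag_mat n d *\<^sub>v unit_vec n i = complex_of_real (d i) \<cdot>\<^sub>v unit_vec n i"
    using i by (auto simp: real_diag_mat_mult_vec)
  then show ?thesis
    using unitary_matD[OF U] unitary_mat_col[OF U i]
    by (simp add: unitary_diag_mult_vec[OF U] mult_mat_vec[of _ n n])
qed

lemma unitary_diag_form:
  assumes U: "unitary_mat n U" and v: "v \<in> carrier_vec n"
  shows "conjugate v \<bullet> ((U * real_diag_mat n d * mat_adjoint U) *\<^sub>v v)
    = complex_of_real (\<Sum>i<n. d i * (cmod ((mat_adjoint U *\<^sub>v v) $ i))\<^sup>2)"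
proof -
  note U' = unitary_matD[OF U]
  have w: "real_diag_mat n d *\<^sub>v (mat_adjoint U *\<^sub>v v) \<in> carrier_vec n"
    using U'(2) v by (metis mult_mat_vec_carrier real_diag_mat_carrier)
  have "conjugate v \<bullet> ((U * real_diag_mat n d * mat_adjoint U) *\<^sub>v v)
    = conjugate (mat_adjoint U *\<^sub>v v) \<bullet> (real_diag_mat n d *\<^sub>v (mat_adjoint U *\<^sub>v v))"
    unfolding unitary_diag_mult_vec[OF U v] by (rule scalar_prod_mat_adjoint[OF U'(1) v w])
  then show ?thesis
    using U' v by (simp add: real_diag_mat_form)
qed

lemma hermitian_unitary_diag:
  assumes U: "unitary_mat n U"
  shows "hermitian_mat n (U * real_diag_mat n d * mat_adjoint U)"
  using unitary_conj_hermitian[OF unitary_mat_adjoint[OF U], of "real_diag_mat n d"]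
  by (simp add: hermitian_mat_iff_adjoint)

lemma unitary_diag_mult:
  assumes U: "unitary_mat n U"
  shows "(U * real_diag_mat n d * mat_adjoint U) * (U * real_diag_mat n e * mat_adjoint U)
    = U * real_diag_mat n (\<lambda>i. d i * e i) * mat_adjoint U"
  using unitary_conj_mult[OF unitary_mat_adjoint[OF U], of "real_diag_mat n d" "real_diag_mat n e"]
  by (simp add: real_diag_mat_mult)

section \<open>The spectral theorem for Hermitian matrices\<close>

definition normalize_vec :: "complex vec \<Rightarrow> complex vec" where
  "normalize_vec w = complex_of_real (1 / sqrt (Re (w \<bullet>c w))) \<cdot>\<^sub>v w"

lemma normalize_vec_carrier [simp]: "w \<in> carrier_vec n \<Longrightarrow> normalize_vec w \<in> carrier_vec n"
  by (simp add: normalize_vec_def)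

lemma normalize_vec_id: "w \<bullet>c w = 1 \<Longrightarrow> normalize_vec w = w"
  by (simp add: normalize_vec_def)

lemma normalize_vec_sprod:
  assumes "w \<in> carrier_vec n" "u \<in> carrier_vec n"
  shows "normalize_vec w \<bullet>c normalize_vec u
    = complex_of_real (1 / (sqrt (Re (w \<bullet>c w)) * sqrt (Re (u \<bullet>c u)))) * (w \<bullet>c u)"
proof -
  have "(a \<cdot>\<^sub>v w) \<bullet>c (b \<cdot>\<^sub>v u) = a * cnj b * (w \<bullet>c u)" for a b
    using assms by (simp add: scalar_prod_def sum_distrib_left mult_ac)
  then show ?thesis
    by (simp add: normalize_vec_def)
qed

lemma normalize_vec_unit:
  assumes w: "w \<in> carrier_vec n" "w \<noteq> 0\<^sub>v n"
  shows "normalize_vec w \<bullet>c normalize_vec w = 1"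
proof -
  have "w \<bullet>c w > 0"
    using w by simp
  then obtain r where r: "w \<bullet>c w = complex_of_real r" "r > 0"
    by (auto simp: less_complex_def complex_eq_iff intro: exI[of _ "Re (w \<bullet>c w)"])
  then show ?thesis
    using normalize_vec_sprod[OF w(1) w(1)] by simp
qed

lemma unitary_mat_of_cols:
  assumes ws: "set ws \<subseteq> carrier_vec n" "length ws = n"
    and orthonormal: "\<And>i j. i < n \<Longrightarrow> j < n \<Longrightarrow> ws ! i \<bullet>c ws ! j = (if i = j then 1 else 0)"
  shows "unitary_mat n (mat_of_cols n ws)"
proof (rule unitary_matI)
  show "mat_adjoint (mat_of_cols n ws) * mat_of_cols n ws = 1\<^sub>m n"
  proof (rule eq_matI)
    fix i j assume "i < dim_row (1\<^sub>m n)" "j < dim_col (1\<^sub>m n)"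
    then have ij: "i < n" "j < n" by auto
    moreover have "ws ! i \<in> carrier_vec n" "ws ! j \<in> carrier_vec n"
      using ws ij by auto
    ultimately have "(mat_adjoint (mat_of_cols n ws) * mat_of_cols n ws) $$ (i, j) = ws ! j \<bullet>c ws ! i"
      using ws by (auto simp: scalar_prod_def mat_of_cols_index mult.commute intro!: sum.cong)
    then show "(mat_adjoint (mat_of_cols n ws) * mat_of_cols n ws) $$ (i, j) = 1\<^sub>m n $$ (i, j)"
      using orthonormal[OF ij(2,1)] ij by auto
  qed (use ws in auto)
qed (use ws mat_of_cols_carrier(1)[of n ws] in simp)

lemma exists_unitary_mat_first_col:
  assumes v: "v \<in> carrier_vec n" "v \<bullet>c v = 1"
  shows "\<exists>W. unitary_mat n W \<and> col W 0 = v"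
proof -
  interpret cof_vec_space n "TYPE(complex)" .
  have v0: "v \<noteq> 0\<^sub>v n"
    using v by auto
  have n: "n \<noteq> 0"
  proof
    assume "n = 0"
    then have "v \<bullet>c v = 0"
      using v(1) by (simp add: scalar_prod_def)
    with v(2) show False by simp
  qed
  define b where "b = basis_completion v"
  then have b: "distinct b" "\<not> lin_dep (set b)" "set b \<subseteq> carrier_vec n" "hd b = v" "length b = n"
    using basis_completion[OF v(1) v0] by auto
  then obtain vs where "b = v # vs"
    using n by (cases b) auto
  define ws where "ws = gram_schmidt n b"
  have ws: "corthogonal ws" "set ws \<subseteq> carrier_vec n" "length ws = n" "hd ws = v"
    using gram_schmidt_result[OF b(3,1,2) ws_def] b(5) gram_schmidt_hd[OF v(1), of vs]
      \<open>b = v # vs\<close> ws_def by auto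
  have ws_nonzero: "ws ! i \<noteq> 0\<^sub>v n" if "i < n" for i
    using corthogonalD[OF ws(1), of i i] ws(3) that by auto
  define us where "us = map normalize_vec ws"
  have us: "set us \<subseteq> carrier_vec n" "length us = n"
    using ws(2,3) by (auto simp: us_def)
  have "us ! i \<bullet>c us ! j = (if i = j then 1 else 0)" if ij: "i < n" "j < n" for i j
  proof -
    have wsij: "ws ! i \<in> carrier_vec n" "ws ! j \<in> carrier_vec n"
      using ws(2,3) ij by auto
    show ?thesis
    proof (cases "i = j")
      case True
      show ?thesis
        using True ij ws(3) wsij normalize_vec_unit[OF _ ws_nonzero[OF ij(1)]] by (simp add: us_def)
    next
      case False
      then have "ws ! i \<bullet>c ws ! j = 0"
        using corthogonalD[OF ws(1), of i j] ij ws(3) by simp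
      then show ?thesis
        using False ij ws wsij normalize_vec_sprod[of "ws ! i" n "ws ! j"] by (simp add: us_def)
    qed
  qed
  then have "unitary_mat n (mat_of_cols n us)"
    by (rule unitary_mat_of_cols[OF us])
  moreover have "col (mat_of_cols n us) 0 = v"
    using us ws n normalize_vec_id[OF v(2)] by (cases ws) (auto simp: us_def)
  ultimately show ?thesis by blast
qed

lemma exists_unitary_eigen_first_col:
  assumes A: "A \<in> carrier_mat n n" and n: "n \<noteq> 0"
  shows "\<exists>W e. unitary_mat n W \<and> col (mat_adjoint W * A * W) 0 = e \<cdot>\<^sub>v unit_vec n 0"
proof -
  obtain e where "eigenvalue A e"
    using spectrum_non_empty[OF A] n by (auto simp: spectrum_def)
  then obtain v where v: "v \<in> carrier_vec n" "v \<noteq> 0\<^sub>v n" "A *\<^sub>v v = e \<cdot>\<^sub>v v"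
    using A by (auto simp: eigenvalue_def eigenvector_def)
  define c where "c = complex_of_real (1 / sqrt (Re (v \<bullet>c v)))"
  have v1: "normalize_vec v \<in> carrier_vec n" "normalize_vec v \<bullet>c normalize_vec v = 1"
    "A *\<^sub>v normalize_vec v = e \<cdot>\<^sub>v normalize_vec v"
    using v normalize_vec_unit[OF v(1,2)] mult_mat_vec[OF A v(1), of c]
    by (auto simp: normalize_vec_def c_def smult_smult_assoc mult.commute)
  obtain W where W: "unitary_mat n W" "col W 0 = normalize_vec v"
    using exists_unitary_mat_first_col[OF v1(1,2)] by blast
  note W' = unitary_matD[OF W(1)]
  have col0: "col W 0 \<in> carrier_vec n"
    using W(2) v1(1) by simp
  have "col (mat_adjoint W * A * W) 0 = (mat_adjoint W * A) *\<^sub>v col W 0"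
    using A W' n by (simp add: col_mult2[of _ n n _ n])
  also have "\<dots> = mat_adjoint W *\<^sub>v (e \<cdot>\<^sub>v col W 0)"
    using A W' col0 v1(3) by (simp add: W(2) assoc_mult_mat_vec[of _ n n _ n])
  also have "\<dots> = e \<cdot>\<^sub>v (mat_adjoint W *\<^sub>v col W 0)"
    using W' col0 by (simp add: mult_mat_vec[of _ n n])
  also have "mat_adjoint W *\<^sub>v col W 0 = unit_vec n 0"
  proof -
    have "mat_adjoint W *\<^sub>v col W 0 = col (mat_adjoint W * W) 0"
      using W'(1,2) n by (simp add: col_mult2[of _ n n _ n])
    then show ?thesis
      using n by (simp add: W'(3))
  qed
  finally show ?thesis
    using W(1) by blast
qed

lemma mat_adjoint_block_diag:
  fixes A D :: "complex mat"
  assumes "A \<in> carrier_mat n1 n1" "D \<in> carrier_mat n2 n2"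
  shows "mat_adjoint (four_block_mat A (0\<^sub>m n1 n2) (0\<^sub>m n2 n1) D)
    = four_block_mat (mat_adjoint A) (0\<^sub>m n1 n2) (0\<^sub>m n2 n1) (mat_adjoint D)"
  by (rule eq_matI) (use assms in auto)

lemma block_diag_mult:
  fixes A B C D :: "'a :: semiring_0 mat"
  assumes "A \<in> carrier_mat n1 n1" "B \<in> carrier_mat n2 n2" "C \<in> carrier_mat n1 n1" "D \<in> carrier_mat n2 n2"
  shows "four_block_mat A (0\<^sub>m n1 n2) (0\<^sub>m n2 n1) B * four_block_mat C (0\<^sub>m n1 n2) (0\<^sub>m n2 n1) D
    = four_block_mat (A * C) (0\<^sub>m n1 n2) (0\<^sub>m n2 n1) (B * D)"
proof -
  have "four_block_mat A (0\<^sub>m n1 n2) (0\<^sub>m n2 n1) B * four_block_mat C (0\<^sub>m n1 n2) (0\<^sub>m n2 n1) D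
    = four_block_mat (A * C + 0\<^sub>m n1 n2 * 0\<^sub>m n2 n1) (A * 0\<^sub>m n1 n2 + 0\<^sub>m n1 n2 * D)
        (0\<^sub>m n2 n1 * C + B * 0\<^sub>m n2 n1) (0\<^sub>m n2 n1 * 0\<^sub>m n1 n2 + B * D)"
    by (rule mult_four_block_mat) (use assms in auto)
  then show ?thesis
    using assms by simp
qed

lemma unitary_mat_block_diag:
  assumes U: "unitary_mat m U"
  shows "unitary_mat (Suc m) (four_block_mat (1\<^sub>m 1) (0\<^sub>m 1 m) (0\<^sub>m m 1) U)"
proof (rule unitary_matI)
  note U' = unitary_matD[OF U]
  show "four_block_mat (1\<^sub>m 1) (0\<^sub>m 1 m) (0\<^sub>m m 1) U \<in> carrier_mat (Suc m) (Suc m)"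
    using U'(1) by (intro carrier_matI) auto
  have "mat_adjoint (four_block_mat (1\<^sub>m 1) (0\<^sub>m 1 m) (0\<^sub>m m 1) U) * four_block_mat (1\<^sub>m 1) (0\<^sub>m 1 m) (0\<^sub>m m 1) U
    = four_block_mat (1\<^sub>m 1) (0\<^sub>m 1 m) (0\<^sub>m m 1) (1\<^sub>m m)"
    using U' by (simp add: mat_adjoint_block_diag block_diag_mult)
  then show "mat_adjoint (four_block_mat (1\<^sub>m 1) (0\<^sub>m 1 m) (0\<^sub>m m 1) U) * four_block_mat (1\<^sub>m 1) (0\<^sub>m 1 m) (0\<^sub>m m 1) U
    = 1\<^sub>m (Suc m)"
    by simp
qed

lemma block_diag_conj_real_diag_mat:
  assumes U: "unitary_mat m U"
  defines "P \<equiv> four_block_mat (1\<^sub>m 1) (0\<^sub>m 1 m) (0\<^sub>m m 1) U"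
  shows "P * real_diag_mat (Suc m) (case_nat c d) * mat_adjoint P
    = four_block_mat (real_diag_mat 1 (\<lambda>_. c)) (0\<^sub>m 1 m) (0\<^sub>m m 1) (U * real_diag_mat m d * mat_adjoint U)"
proof -
  note U' = unitary_matD[OF U]
  have "real_diag_mat (Suc m) (case_nat c d)
      = four_block_mat (real_diag_mat 1 (\<lambda>_. c)) (0\<^sub>m 1 m) (0\<^sub>m m 1) (real_diag_mat m d)"
    by (rule eq_matI) (auto split: nat.split)
  moreover have "mat_adjoint P = four_block_mat (1\<^sub>m 1) (0\<^sub>m 1 m) (0\<^sub>m m 1) (mat_adjoint U)"
    unfolding P_def using U' by (simp add: mat_adjoint_block_diag)
  ultimately show ?thesis
    unfolding P_def using U' by (simp add: block_diag_mult)
qed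

lemma hermitian_first_col_block:
  assumes A: "hermitian_mat (Suc m) A" and col0: "col A 0 = e \<cdot>\<^sub>v unit_vec (Suc m) 0"
  shows "\<exists>c A3. hermitian_mat m A3 \<and>
    A = four_block_mat (real_diag_mat 1 (\<lambda>_. c)) (0\<^sub>m 1 m) (0\<^sub>m m 1) A3"
proof -
  have carrier: "A \<in> carrier_mat (Suc m) (Suc m)"
    and sym: "\<And>i j. i < Suc m \<Longrightarrow> j < Suc m \<Longrightarrow> A $$ (i, j) = cnj (A $$ (j, i))"
    using A unfolding hermitian_mat_def by blast+
  have col: "A $$ (i, 0) = (if i = 0 then e else 0)" if "i < Suc m" for i
  proof -
    have "A $$ (i, 0) = col A 0 $ i"
      using carrier that by simp
    then show ?thesis
      using that by (simp add: col0)
  qed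
  have e: "e = complex_of_real (Re e)"
  proof -
    have "e = cnj e"
      using sym[of 0 0] col[of 0] by auto
    then show ?thesis
      by (simp add: complex_eq_iff)
  qed
  have row: "A $$ (0, j) = 0" if "0 < j" "j < Suc m" for j
  proof -
    have "A $$ (0, j) = cnj (A $$ (j, 0))"
      using that by (intro sym) auto
    then show ?thesis
      using col[OF that(2)] that(1) by simp
  qed
  define A3 where "A3 = mat m m (\<lambda>(i, j). A $$ (Suc i, Suc j))"
  define B where "B = four_block_mat (real_diag_mat 1 (\<lambda>_. Re e)) (0\<^sub>m 1 m) (0\<^sub>m m 1) A3"
  have "hermitian_mat m A3"
    by (auto simp: hermitian_mat_def A3_def intro: sym)
  moreover have "A = B"
  proof (rule eq_matI)
    show "dim_row A = dim_row B" "dim_col A = dim_col B"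
      using carrier by (simp_all add: B_def A3_def)
    fix i j assume "i < dim_row B" "j < dim_col B"
    then have ij: "i < Suc m" "j < Suc m"
      by (simp_all add: B_def A3_def)
    show "A $$ (i, j) = B $$ (i, j)"
    proof (cases "j = 0")
      case True
      then show ?thesis
        using ij col[OF ij(1)] e by (auto simp: B_def A3_def)
    next
      case False
      then show ?thesis
        using ij row[of j] by (cases i) (auto simp: B_def A3_def)
    qed
  qed
  ultimately show ?thesis
    unfolding B_def by blast
qed

theorem hermitian_spectral:
  "hermitian_mat n A \<Longrightarrow> \<exists>U d. unitary_mat n U \<and> A = U * real_diag_mat n d * mat_adjoint U"
proof (induction n arbitrary: A)
  case 0
  then have "A = 1\<^sub>m 0 * real_diag_mat 0 (\<lambda>_. 0) * mat_adjoint (1\<^sub>m 0)"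
    unfolding hermitian_mat_iff_adjoint by (auto intro!: eq_matI)
  moreover have "unitary_mat 0 (1\<^sub>m 0)"
    by (rule unitary_matI) auto
  ultimately show ?case by blast
next
  case (Suc m)
  have A: "A \<in> carrier_mat (Suc m) (Suc m)"
    using Suc.prems by (simp add: hermitian_mat_iff_adjoint)
  obtain W e where W: "unitary_mat (Suc m) W"
    and col0: "col (mat_adjoint W * A * W) 0 = e \<cdot>\<^sub>v unit_vec (Suc m) 0"
    using exists_unitary_eigen_first_col[OF A] by blast
  obtain c A3 where A3: "hermitian_mat m A3"
    and block: "mat_adjoint W * A * W = four_block_mat (real_diag_mat 1 (\<lambda>_. c)) (0\<^sub>m 1 m) (0\<^sub>m m 1) A3"
    using hermitian_first_col_block[OF unitary_conj_hermitian[OF W Suc.prems] col0] by blast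
  obtain U3 d where U3: "unitary_mat m U3" and A3_eq: "A3 = U3 * real_diag_mat m d * mat_adjoint U3"
    using Suc.IH[OF A3] by blast
  define P where "P = four_block_mat (1\<^sub>m 1) (0\<^sub>m 1 m) (0\<^sub>m m 1) U3"
  define D where "D = real_diag_mat (Suc m) (case_nat c d)"
  have P: "unitary_mat (Suc m) P"
    unfolding P_def by (rule unitary_mat_block_diag[OF U3])
  note W' = unitary_matD[OF W] and P' = unitary_matD[OF P]
  have "A = W * (mat_adjoint W * A * W) * mat_adjoint W"
    by (rule unitary_conj_cancel[OF W A, symmetric])
  also have "mat_adjoint W * A * W = P * D * mat_adjoint P"
    unfolding block A3_eq P_def D_def by (rule block_diag_conj_real_diag_mat[OF U3, symmetric])
  also have "W * (P * D * mat_adjoint P) * mat_adjoint W = (W * P) * D * mat_adjoint (W * P)"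
    using W' P' by (simp add: D_def mat_adjoint_mult[OF W'(1) P'(1)] assoc_mult_mat[of _ "Suc m" "Suc m" _ "Suc m" _ "Suc m"])
  finally show ?case
    using unitary_mat_mult[OF W P] unfolding D_def by blast
qed

section \<open>Positive semidefinite square roots\<close>

lemma psd_matD:
  assumes "psd_mat n A"
  shows "A \<in> carrier_mat n n" "mat_adjoint A = A"
  using assms by (simp_all add: psd_mat_def hermitian_mat_iff_adjoint)

lemma psd_mat_form_nonneg:
  "psd_mat n A \<Longrightarrow> v \<in> carrier_vec n \<Longrightarrow> 0 \<le> Re (conjugate v \<bullet> (A *\<^sub>v v))"
  unfolding psd_mat_def by blast

lemma anticommutator_diff_of_equal_squares:
  fixes B C :: "'a :: ring mat"
  assumes "B \<in> carrier_mat n n" "C \<in> carrier_mat n n" "B * B = C * C"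
  shows "B * (B - C) + (B - C) * C = 0\<^sub>m n n"
  using assms
  by (simp add: mult_minus_distrib_mat[of _ n n] minus_mult_distrib_mat[of _ n n])
    (rule eq_matI, auto)

lemma psd_unitary_diag:
  assumes U: "unitary_mat n U" and d: "\<And>i. i < n \<Longrightarrow> 0 \<le> d i"
  shows "psd_mat n (U * real_diag_mat n d * mat_adjoint U)"
proof -
  have "0 \<le> (\<Sum>i<n. d i * (cmod ((mat_adjoint U *\<^sub>v v) $ i))\<^sup>2)" for v
    using d by (intro sum_nonneg) simp
  then show ?thesis
    using hermitian_unitary_diag[OF U] unitary_diag_form[OF U] by (simp add: psd_mat_def)
qed

lemma psd_unitary_diag_nonneg:
  assumes psd: "psd_mat n (U * real_diag_mat n d * mat_adjoint U)" and U: "unitary_mat n U" and i: "i < n"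
  shows "0 \<le> d i"
proof -
  have "conjugate (col U i) \<bullet> ((U * real_diag_mat n d * mat_adjoint U) *\<^sub>v col U i) = complex_of_real (d i)"
    using unitary_col_norm[OF U i] unitary_mat_col[OF U i]
    by (simp add: unitary_diag_eigenvector[OF U i])
  then show ?thesis
    using psd unitary_mat_col(1)[OF U i] unfolding psd_mat_def by (metis Re_complex_of_real)
qed

text \<open>With \<open>D = B - C\<close> and \<open>D w = \<delta> w\<close>: \<open>B D + D C = B\<^sup>2 - C\<^sup>2 = 0\<close> gives
  \<open>\<delta> (w\<^sup>* B w + w\<^sup>* C w) = 0\<close>, while \<open>\<delta> = w\<^sup>* B w - w\<^sup>* C w\<close>; both forms are nonnegative.\<close>

lemma psd_sqrt_eigenvalue_zero:
  assumes B: "psd_mat n B" and C: "psd_mat n C" and sq: "B * B = C * C"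
    and w: "w \<in> carrier_vec n" "conjugate w \<bullet> w = 1"
    and eigen: "(B - C) *\<^sub>v w = complex_of_real \<delta> \<cdot>\<^sub>v w"
  shows "\<delta> = 0"
proof -
  note Bc = psd_matD(1)[OF B] and Cc = psd_matD(1)[OF C]
  define D where "D = B - C"
  have Dc: "D \<in> carrier_mat n n" and hD: "mat_adjoint D = D"
    using Bc Cc psd_matD(2)[OF B] psd_matD(2)[OF C] by (auto simp: D_def mat_adjoint_minus)
  define qB where "qB = conjugate w \<bullet> (B *\<^sub>v w)"
  define qC where "qC = conjugate w \<bullet> (C *\<^sub>v w)"
  have Dw: "D *\<^sub>v w = complex_of_real \<delta> \<cdot>\<^sub>v w"
    using eigen by (simp add: D_def)
  have "complex_of_real \<delta> = conjugate w \<bullet> (D *\<^sub>v w)"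
    using w by (simp add: Dw)
  also have "\<dots> = qB - qC"
    using Bc Cc w by (simp add: D_def qB_def qC_def minus_mult_distrib_mat_vec scalar_prod_minus_distrib[of _ n])
  finally have diff: "\<delta> = Re qB - Re qC"
    by (metis Re_complex_of_real minus_complex.sel(1))
  have "B * D + D * C = 0\<^sub>m n n"
    unfolding D_def by (rule anticommutator_diff_of_equal_squares[OF Bc Cc sq])
  then have "B *\<^sub>v (D *\<^sub>v w) + D *\<^sub>v (C *\<^sub>v w) = 0\<^sub>m n n *\<^sub>v w"
    using add_mult_distrib_mat_vec[OF mult_carrier_mat[OF Bc Dc] mult_carrier_mat[OF Dc Cc] w(1)]
      assoc_mult_mat_vec[OF Bc Dc w(1)] assoc_mult_mat_vec[OF Dc Cc w(1)]
    by simp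
  also have "0\<^sub>m n n *\<^sub>v w = 0\<^sub>v n"
    by (rule eq_vecI) (use w in \<open>auto simp: scalar_prod_def\<close>)
  finally have "B *\<^sub>v (D *\<^sub>v w) + D *\<^sub>v (C *\<^sub>v w) = 0\<^sub>v n" .
  then have "conjugate w \<bullet> (B *\<^sub>v (D *\<^sub>v w)) + conjugate w \<bullet> (D *\<^sub>v (C *\<^sub>v w)) = 0"
    using scalar_prod_add_distrib[of "conjugate w" n "B *\<^sub>v (D *\<^sub>v w)" "D *\<^sub>v (C *\<^sub>v w)"] Bc Cc Dc w(1)
    by simp
  moreover have "conjugate w \<bullet> (D *\<^sub>v (C *\<^sub>v w)) = complex_of_real \<delta> * qC"
    using scalar_prod_mat_adjoint[OF Dc w(1), of "C *\<^sub>v w"] Cc w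
    by (simp add: hD Dw qC_def conjugate_smult_vec)
  ultimately have "complex_of_real \<delta> * (qB + qC) = 0"
    using Bc w by (simp add: Dw qB_def mult_mat_vec[of _ n n] distrib_left)
  from arg_cong[OF this, of Re] have "\<delta> * (Re qB + Re qC) = 0"
    by simp
  then show "\<delta> = 0"
    using diff psd_mat_form_nonneg[OF B w(1)] psd_mat_form_nonneg[OF C w(1)]
    by (auto simp: qB_def qC_def)
qed

lemma psd_sqrt_unique:
  assumes B: "psd_mat n B" and C: "psd_mat n C" and sq: "B * B = C * C"
  shows "B = C"
proof -
  note Bc = psd_matD(1)[OF B] and Cc = psd_matD(1)[OF C]
  have "hermitian_mat n (B - C)"
    using B C by (auto simp: psd_mat_def hermitian_mat_iff_adjoint mat_adjoint_minus)
  then obtain W \<delta> where W: "unitary_mat n W" and D: "B - C = W * real_diag_mat n \<delta> * mat_adjoint W"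
    using hermitian_spectral by blast
  have "\<delta> i = 0" if i: "i < n" for i
    using psd_sqrt_eigenvalue_zero[OF B C sq unitary_mat_col(1)[OF W i] unitary_col_norm[OF W i]]
      unitary_diag_eigenvector[OF W i] D by simp
  then have "real_diag_mat n \<delta> = 0\<^sub>m n n"
    by (intro eq_matI) auto
  then have zero: "B - C = 0\<^sub>m n n"
    using unitary_matD[OF W] D by simp
  show "B = C"
  proof (rule eq_matI)
    fix i j assume ij: "i < dim_row C" "j < dim_col C"
    have "(B - C) $$ (i, j) = 0"
      using ij Cc by (simp add: zero)
    then show "B $$ (i, j) = C $$ (i, j)"
      using ij Bc Cc by simp
  qed (use Bc Cc in auto)
qed

lemma mat_sqrt_eqI:
  assumes "psd_mat n S" "S * S = A"
  shows "mat_sqrt n A = S"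
  unfolding mat_sqrt_def using assms psd_sqrt_unique by blast

lemma unitary_diag_sqrt:
  assumes U: "unitary_mat n U" and d: "\<And>i. i < n \<Longrightarrow> 0 \<le> d i"
  defines "S \<equiv> U * real_diag_mat n (\<lambda>i. sqrt (d i)) * mat_adjoint U"
  shows "psd_mat n S" "S * S = U * real_diag_mat n d * mat_adjoint U"
proof -
  show "psd_mat n S"
    unfolding S_def by (rule psd_unitary_diag[OF U]) (simp add: d)
  have "real_diag_mat n (\<lambda>i. sqrt (d i) * sqrt (d i)) = real_diag_mat n d"
    using d by (intro eq_matI) auto
  then show "S * S = U * real_diag_mat n d * mat_adjoint U"
    unfolding S_def by (simp add: unitary_diag_mult[OF U])
qed

lemma mat_sqrt_unitary_diag:
  assumes U: "unitary_mat n U" and d: "\<And>i. i < n \<Longrightarrow> 0 \<le> d i"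
  shows "mat_sqrt n (U * real_diag_mat n d * mat_adjoint U) = U * real_diag_mat n (\<lambda>i. sqrt (d i)) * mat_adjoint U"
  by (rule mat_sqrt_eqI[OF unitary_diag_sqrt[OF U d]])

lemma mat_sqrt_psd:
  assumes A: "psd_mat n A"
  shows "psd_mat n (mat_sqrt n A)" "mat_sqrt n A * mat_sqrt n A = A"
proof -
  obtain U d where U: "unitary_mat n U" and A_eq: "A = U * real_diag_mat n d * mat_adjoint U"
    using hermitian_spectral[of n A] A unfolding psd_mat_def by blast
  have d: "\<And>i. i < n \<Longrightarrow> 0 \<le> d i"
    using psd_unitary_diag_nonneg A U unfolding A_eq by blast
  have S: "mat_sqrt n A = U * real_diag_mat n (\<lambda>i. sqrt (d i)) * mat_adjoint U"
    unfolding A_eq by (rule mat_sqrt_unitary_diag[OF U d])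
  show "psd_mat n (mat_sqrt n A)" "mat_sqrt n A * mat_sqrt n A = A"
    unfolding S using unitary_diag_sqrt[of n U d] U d by (auto simp: A_eq)
qed

lemma hN_unitary_diag:
  assumes U: "unitary_mat n U" and d: "\<And>i. i < n \<Longrightarrow> 0 \<le> d i"
  shows "hN n (U * real_diag_mat n d * mat_adjoint U) = ((\<Sum>i<n. sqrt (d i))\<^sup>2 - 1) / 2"
proof -
  have "mtrace (U * real_diag_mat n (\<lambda>i. sqrt (d i)) * mat_adjoint U) = mtrace (real_diag_mat n (\<lambda>i. sqrt (d i)))"
    using unitary_conj_mtrace[OF unitary_mat_adjoint[OF U]] by simp
  moreover have "mat_sqrt n (U * real_diag_mat n d * mat_adjoint U) = U * real_diag_mat n (\<lambda>i. sqrt (d i)) * mat_adjoint U"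
    by (rule mat_sqrt_unitary_diag[OF U d])
  ultimately show ?thesis
    unfolding hN_def by (simp add: mtrace_real_diag_mat)
qed

section \<open>The trace of a square root against the diagonal\<close>

lemma hermitian_square_diag:
  assumes S: "hermitian_mat n S" and i: "i < n"
  shows "(S * S) $$ (i, i) = complex_of_real (\<Sum>k<n. (cmod (S $$ (i, k)))\<^sup>2)"
proof -
  have Sc: "S \<in> carrier_mat n n" and sym: "\<And>k. k < n \<Longrightarrow> S $$ (k, i) = cnj (S $$ (i, k))"
    using S i unfolding hermitian_mat_def by blast+
  have "(S * S) $$ (i, i) = (\<Sum>k<n. S $$ (i, k) * S $$ (k, i))"
    using Sc i by (simp add: scalar_prod_def atLeast0LessThan)
  also have "\<dots> = (\<Sum>k<n. S $$ (i, k) * cnj (S $$ (i, k)))"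
    using sym by (intro sum.cong) auto
  finally show ?thesis
    by (simp add: complex_norm_square[unfolded of_real_power])
qed

lemma hermitian_diag_sq_le:
  assumes S: "hermitian_mat n S" and i: "i < n"
  shows "(Re (S $$ (i, i)))\<^sup>2 \<le> Re ((S * S) $$ (i, i))"
    and "(Re (S $$ (i, i)))\<^sup>2 = Re ((S * S) $$ (i, i)) \<Longrightarrow> k < n \<Longrightarrow> k \<noteq> i \<Longrightarrow> S $$ (i, k) = 0"
proof -
  define rest where "rest = (\<Sum>k\<in>{..<n} - {i}. (cmod (S $$ (i, k)))\<^sup>2)"
  have rest: "0 \<le> rest"
    unfolding rest_def by (intro sum_nonneg) simp
  have split: "Re ((S * S) $$ (i, i)) = (cmod (S $$ (i, i)))\<^sup>2 + rest"
    using i by (simp add: hermitian_square_diag[OF S i] rest_def sum.remove[of "{..<n}" i])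
  have Re_le: "(Re (S $$ (i, i)))\<^sup>2 \<le> (cmod (S $$ (i, i)))\<^sup>2"
    by (simp add: abs_Re_le_cmod abs_le_square_iff[symmetric])
  show "(Re (S $$ (i, i)))\<^sup>2 \<le> Re ((S * S) $$ (i, i))"
    using split rest Re_le by linarith
  assume "(Re (S $$ (i, i)))\<^sup>2 = Re ((S * S) $$ (i, i))" "k < n" "k \<noteq> i"
  then have "rest = 0" and "k \<in> {..<n} - {i}"
    using split rest Re_le by auto
  then show "S $$ (i, k) = 0"
    unfolding rest_def by (simp add: sum_nonneg_eq_0_iff)
qed

lemma hermitian_square_real_diag:
  assumes S: "hermitian_mat n S" and eq: "\<And>i. i < n \<Longrightarrow> (Re (S $$ (i, i)))\<^sup>2 = Re ((S * S) $$ (i, i))"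
  shows "S * S = real_diag_mat n (\<lambda>i. Re ((S * S) $$ (i, i)))"
proof (rule eq_matI)
  have Sc: "S \<in> carrier_mat n n"
    using S unfolding hermitian_mat_def by blast
  have off: "S $$ (i, k) = 0" if "i < n" "k < n" "k \<noteq> i" for i k
    using hermitian_diag_sq_le(2)[OF S that(1) eq[OF that(1)] that(2,3)] .
  fix i j assume "i < dim_row (real_diag_mat n (\<lambda>i. Re ((S * S) $$ (i, i))))"
    "j < dim_col (real_diag_mat n (\<lambda>i. Re ((S * S) $$ (i, i))))"
  then have ij: "i < n" "j < n" by auto
  show "(S * S) $$ (i, j) = real_diag_mat n (\<lambda>i. Re ((S * S) $$ (i, i))) $$ (i, j)"
  proof (cases "i = j")
    case True
    then show ?thesis
      using ij by (simp add: hermitian_square_diag[OF S])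
  next
    case False
    have "(S * S) $$ (i, j) = (\<Sum>k<n. S $$ (i, k) * S $$ (k, j))"
      using Sc ij by (simp add: scalar_prod_def atLeast0LessThan)
    also have "\<dots> = 0"
      using off[OF ij(1)] off[of _ j] False ij by (intro sum.neutral) (metis lessThan_iff mult_zero_left mult_zero_right)
    finally show ?thesis
      using False ij by simp
  qed
qed (use S in \<open>auto simp: hermitian_mat_iff_adjoint\<close>)

lemma hermitian_trace_sq_le:
  assumes S: "hermitian_mat n S"
  defines "a \<equiv> \<lambda>i. Re ((S * S) $$ (i, i))"
  shows "(Re (mtrace S))\<^sup>2 \<le> (\<Sum>i<n. sqrt (a i))\<^sup>2"
    and "(Re (mtrace S))\<^sup>2 = (\<Sum>i<n. sqrt (a i))\<^sup>2 \<Longrightarrow> S * S = real_diag_mat n a"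
proof -
  have "dim_row S = n"
    using S unfolding hermitian_mat_def by auto
  then have tr: "Re (mtrace S) = (\<Sum>i<n. Re (S $$ (i, i)))"
    by (simp add: mtrace_def)
  have sq_le: "(Re (S $$ (i, i)))\<^sup>2 \<le> a i" if "i < n" for i
    unfolding a_def by (rule hermitian_diag_sq_le(1)[OF S that])
  have "0 \<le> a i" if "i < n" for i
    using order_trans[OF zero_le_power2 sq_le[OF that]] .
  then have nonneg: "0 \<le> (\<Sum>i<n. sqrt (a i))"
    by (intro sum_nonneg) simp
  show "(Re (mtrace S))\<^sup>2 \<le> (\<Sum>i<n. sqrt (a i))\<^sup>2"
    using abs_sum_le_sum_sqrt(1)[of n "\<lambda>i. Re (S $$ (i, i))" a] sq_le nonneg
    by (simp add: tr abs_le_square_iff[symmetric])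
  assume "(Re (mtrace S))\<^sup>2 = (\<Sum>i<n. sqrt (a i))\<^sup>2"
  then have "\<bar>\<Sum>i<n. Re (S $$ (i, i))\<bar> = (\<Sum>i<n. sqrt (a i))"
    using nonneg by (metis tr power2_abs power2_eq_iff_nonneg abs_ge_zero)
  then have "(Re (S $$ (i, i)))\<^sup>2 = a i" if "i < n" for i
    using abs_sum_le_sum_sqrt(2)[of n "\<lambda>i. Re (S $$ (i, i))" a] sq_le that by blast
  then show "S * S = real_diag_mat n a"
    unfolding a_def by (rule hermitian_square_real_diag[OF S])
qed

lemma psd_trace_sqrt_bound:
  assumes \<rho>: "psd_mat n \<rho>" and U: "unitary_mat n U"
  shows "\<And>i. i < n \<Longrightarrow> 0 \<le> diag_in_basis U \<rho> i"
    and "(Re (mtrace (mat_sqrt n \<rho>)))\<^sup>2 \<le> (\<Sum>i<n. sqrt (diag_in_basis U \<rho> i))\<^sup>2"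
    and "(Re (mtrace (mat_sqrt n \<rho>)))\<^sup>2 = (\<Sum>i<n. sqrt (diag_in_basis U \<rho> i))\<^sup>2
      \<Longrightarrow> mat_adjoint U * \<rho> * U = real_diag_mat n (diag_in_basis U \<rho>)"
proof -
  define S where "S = mat_adjoint U * mat_sqrt n \<rho> * U"
  have R: "hermitian_mat n (mat_sqrt n \<rho>)" and RR: "mat_sqrt n \<rho> * mat_sqrt n \<rho> = \<rho>"
    using mat_sqrt_psd[OF \<rho>] by (simp_all add: psd_mat_def)
  have Rc: "mat_sqrt n \<rho> \<in> carrier_mat n n"
    using R by (simp add: hermitian_mat_iff_adjoint)
  have S: "hermitian_mat n S"
    unfolding S_def by (rule unitary_conj_hermitian[OF U R])
  have SS: "S * S = mat_adjoint U * \<rho> * U"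
    unfolding S_def unitary_conj_mult[OF U Rc Rc] RR ..
  have tr: "mtrace S = mtrace (mat_sqrt n \<rho>)"
    unfolding S_def by (rule unitary_conj_mtrace[OF U Rc])
  have diag: "diag_in_basis U \<rho> = (\<lambda>i. Re ((S * S) $$ (i, i)))"
    by (simp add: fun_eq_iff diag_in_basis_def SS)
  show "0 \<le> diag_in_basis U \<rho> i" if "i < n" for i
    unfolding diag hermitian_square_diag[OF S that] by (simp add: sum_nonneg)
  show "(Re (mtrace (mat_sqrt n \<rho>)))\<^sup>2 \<le> (\<Sum>i<n. sqrt (diag_in_basis U \<rho> i))\<^sup>2"
    using hermitian_trace_sq_le(1)[OF S] unfolding diag tr .
  show "(Re (mtrace (mat_sqrt n \<rho>)))\<^sup>2 = (\<Sum>i<n. sqrt (diag_in_basis U \<rho> i))\<^sup>2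
      \<Longrightarrow> mat_adjoint U * \<rho> * U = real_diag_mat n (diag_in_basis U \<rho>)"
    using hermitian_trace_sq_le(2)[OF S] unfolding diag tr SS .
qed

section \<open>Strict concavity of \<open>hN\<close>\<close>

lemma weighted_trace_sqrt_sq_lt:
  assumes \<rho>1: "density_mat n \<rho>1" and \<rho>2: "density_mat n \<rho>2" and ne: "\<rho>1 \<noteq> \<rho>2"
    and U: "unitary_mat n U" and p: "0 < p" "p < 1"
  shows "p * (Re (mtrace (mat_sqrt n \<rho>1)))\<^sup>2 + (1 - p) * (Re (mtrace (mat_sqrt n \<rho>2)))\<^sup>2
    < (\<Sum>i<n. sqrt (p * diag_in_basis U \<rho>1 i + (1 - p) * diag_in_basis U \<rho>2 i))\<^sup>2"
proof -
  have psd: "psd_mat n \<rho>1" "psd_mat n \<rho>2" and tr: "mtrace \<rho>1 = 1" "mtrace \<rho>2 = 1"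
    using \<rho>1 \<rho>2 by (simp_all add: density_mat_def)
  note carrier = psd_matD(1)[OF psd(1)] psd_matD(1)[OF psd(2)]
  define \<alpha> where "\<alpha> = diag_in_basis U \<rho>1"
  define \<beta> where "\<beta> = diag_in_basis U \<rho>2"
  note bound1 = psd_trace_sqrt_bound[OF psd(1) U, folded \<alpha>_def]
    and bound2 = psd_trace_sqrt_bound[OF psd(2) U, folded \<beta>_def]
  have sums: "(\<Sum>i<n. \<alpha> i) = (\<Sum>i<n. \<beta> i)"
    unfolding \<alpha>_def \<beta>_def unitary_conj_diag_sum[OF U carrier(1)] unitary_conj_diag_sum[OF U carrier(2)] tr ..
  have "p * (Re (mtrace (mat_sqrt n \<rho>1)))\<^sup>2 + (1 - p) * (Re (mtrace (mat_sqrt n \<rho>2)))\<^sup>2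
    < (\<Sum>i<n. sqrt (p * \<alpha> i + (1 - p) * \<beta> i))\<^sup>2"
  proof (cases "(Re (mtrace (mat_sqrt n \<rho>1)))\<^sup>2 = (\<Sum>i<n. sqrt (\<alpha> i))\<^sup>2
      \<and> (Re (mtrace (mat_sqrt n \<rho>2)))\<^sup>2 = (\<Sum>i<n. sqrt (\<beta> i))\<^sup>2")
    case True
    then have diag: "mat_adjoint U * \<rho>1 * U = real_diag_mat n \<alpha>" "mat_adjoint U * \<rho>2 * U = real_diag_mat n \<beta>"
      using bound1(3) bound2(3) by blast+
    obtain i where i: "i < n" "\<alpha> i \<noteq> \<beta> i"
    proof (rule ccontr)
      assume "\<not> thesis"
      then have "real_diag_mat n \<alpha> = real_diag_mat n \<beta>"
        using that by (intro eq_matI) auto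
      then have "U * (mat_adjoint U * \<rho>1 * U) * mat_adjoint U = U * (mat_adjoint U * \<rho>2 * U) * mat_adjoint U"
        by (simp add: diag)
      then show False
        using ne by (simp add: unitary_conj_cancel[OF U carrier(1)] unitary_conj_cancel[OF U carrier(2)])
    qed
    show ?thesis
      using sum_sqrt_sq_strictly_concave[of n \<alpha> \<beta>, OF bound1(1) bound2(1) sums p i] True by simp
  next
    case False
    have "p * (Re (mtrace (mat_sqrt n \<rho>1)))\<^sup>2 + (1 - p) * (Re (mtrace (mat_sqrt n \<rho>2)))\<^sup>2
        < p * (\<Sum>i<n. sqrt (\<alpha> i))\<^sup>2 + (1 - p) * (\<Sum>i<n. sqrt (\<beta> i))\<^sup>2"
      using False bound1(2) bound2(2) p
      by (smt (verit) mult_left_mono mult_strict_left_mono)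
    also have "\<dots> \<le> (\<Sum>i<n. sqrt (p * \<alpha> i + (1 - p) * \<beta> i))\<^sup>2"
      using p by (intro sum_sqrt_sq_concave(1)[of n \<alpha> \<beta>, OF bound1(1) bound2(1)]) auto
    finally show ?thesis .
  qed
  then show ?thesis
    by (simp add: \<alpha>_def \<beta>_def)
qed

lemma hN_convex_comb_eigenbasis:
  assumes psd: "psd_mat n \<rho>1" "psd_mat n \<rho>2" and p: "0 \<le> p" "p \<le> 1" and U: "unitary_mat n U"
    and eigen: "complex_of_real p \<cdot>\<^sub>m \<rho>1 + complex_of_real (1 - p) \<cdot>\<^sub>m \<rho>2 = U * real_diag_mat n \<gamma> * mat_adjoint U"
  shows "hN n (complex_of_real p \<cdot>\<^sub>m \<rho>1 + complex_of_real (1 - p) \<cdot>\<^sub>m \<rho>2)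
    = ((\<Sum>i<n. sqrt (p * diag_in_basis U \<rho>1 i + (1 - p) * diag_in_basis U \<rho>2 i))\<^sup>2 - 1) / 2"
proof -
  have \<gamma>: "\<gamma> i = p * diag_in_basis U \<rho>1 i + (1 - p) * diag_in_basis U \<rho>2 i" if "i < n" for i
  proof -
    have "\<gamma> i = diag_in_basis U (U * real_diag_mat n \<gamma> * mat_adjoint U) i"
      by (rule diag_in_basis_unitary_diag[OF U that, symmetric])
    also have "\<dots> = diag_in_basis U (complex_of_real p \<cdot>\<^sub>m \<rho>1 + complex_of_real (1 - p) \<cdot>\<^sub>m \<rho>2) i"
      by (simp only: eigen)
    also have "\<dots> = p * diag_in_basis U \<rho>1 i + (1 - p) * diag_in_basis U \<rho>2 i"
      by (rule diag_in_basis_convex_comb[OF U psd_matD(1)[OF psd(1)] psd_matD(1)[OF psd(2)] that])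
    finally show ?thesis .
  qed
  have "0 \<le> \<gamma> i" if "i < n" for i
    using psd_trace_sqrt_bound(1)[OF psd(1) U that] psd_trace_sqrt_bound(1)[OF psd(2) U that] p
    by (simp add: \<gamma>[OF that])
  then have "hN n (U * real_diag_mat n \<gamma> * mat_adjoint U) = ((\<Sum>i<n. sqrt (\<gamma> i))\<^sup>2 - 1) / 2"
    by (rule hN_unitary_diag[of n U \<gamma>, OF U])
  moreover have "(\<Sum>i<n. sqrt (\<gamma> i)) = (\<Sum>i<n. sqrt (p * diag_in_basis U \<rho>1 i + (1 - p) * diag_in_basis U \<rho>2 i))"
    using \<gamma> by (intro sum.cong) auto
  ultimately show ?thesis
    unfolding eigen by simp
qed

theorem mainTheorem3:
  fixes n :: nat and \<rho>1 \<rho>2 :: "complex mat" and p :: real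
  assumes "density_mat n \<rho>1" and "density_mat n \<rho>2"
    and "\<rho>1 \<noteq> \<rho>2"
    and "0 < p" and "p < 1"
  shows "hN n (complex_of_real p \<cdot>\<^sub>m \<rho>1 + complex_of_real (1 - p) \<cdot>\<^sub>m \<rho>2)
           > p * hN n \<rho>1 + (1 - p) * hN n \<rho>2"
proof -
  have psd: "psd_mat n \<rho>1" "psd_mat n \<rho>2"
    using assms(1,2) by (simp_all add: density_mat_def)
  then have "hermitian_mat n (complex_of_real p \<cdot>\<^sub>m \<rho>1 + complex_of_real (1 - p) \<cdot>\<^sub>m \<rho>2)"
    by (intro hermitian_convex_comb) (simp_all add: psd_mat_def)
  then obtain U \<gamma> where U: "unitary_mat n U"
    and eigen: "complex_of_real p \<cdot>\<^sub>m \<rho>1 + complex_of_real (1 - p) \<cdot>\<^sub>m \<rho>2 = U * real_diag_mat n \<gamma> * mat_adjoint U"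
    using hermitian_spectral by blast
  have "0 \<le> p" "p \<le> 1"
    using assms(4,5) by auto
  with weighted_trace_sqrt_sq_lt[OF assms(1-3) U assms(4,5)] hN_convex_comb_eigenbasis[OF psd _ _ U eigen]
  show ?thesis
    unfolding hN_def[of n \<rho>1] hN_def[of n \<rho>2] by (simp add: field_simps)
qed

end
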